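(* Fix $\epsilon,\phi\in\mathbb R$ with $|\epsilon|>1$ and $\phi\ne\epsilon$. For each $n$, let $(\mu_n,\mathbf x_n)$ be an eigenpair of $T_{n,\epsilon,\phi}$ with $\|\mathbf x_n\|_2=1$, and suppose $\mu_n\to\epsilon+\epsilon^{-1}$ as $n\to\infty$. Then: 1. Eventually, $\mu_n$ is an outlier of $T_{n,\epsilon,\phi}$, and there is a constant $c>0$ independent of $n$ such that eventually every eigenvalue $\lambda_n\ne\mu_n$ of $T_{n,\epsilon,\phi}$ satisfies $|\lambda_n-(\epsilon+\epsilon^{-1})|\ge c$. 2. $\|\mathbf x_n-P_{\mathbf v_n}\mathbf x_n\|_2\to0$ as $n\to\infty$, where $\mathbf v_n=[1,\epsilon^{-1},\ldots,\epsilon^{-n+1}]^\top$.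
   Context: For $n\ge2$ and real parameters $\epsilon,\phi$, $T_{n,\epsilon,\phi}$ is the real symmetric tridiagonal $n\times n$ matrix with diagonal entries $(\epsilon,0,\ldots,0,\phi)$ and all sub- and super-diagonal entries equal to $1$. An outlier is an eigenvalue not in $[-2,2]$. For $\mathbf u\in\mathbb R^n\setminus\{0\}$, $P_{\mathbf u}$ denotes the orthogonal projector onto $\mathrm{span}\{\mathbf u\}$: $P_{\mathbf u}\mathbf x=\frac{\mathbf x^\top\mathbf u}{\mathbf u^\top\mathbf u}\mathbf u$. *)

theory Defs
  imports Complex_Main "Jordan_Normal_Form.Char_Poly"
begin

text \<open>The tridiagonal matrix T_{n,eps,phi}: diagonal (eps,0,...,0,phi), off-diagonals 1.
  Indices are 0-based; intended for n >= 2.\<close>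
definition T_mat :: "nat \<Rightarrow> real \<Rightarrow> real \<Rightarrow> real mat" where
  "T_mat n eps phi = mat n n (\<lambda>(i,j).
     if i = j then (if i = 0 then eps else if i = n - 1 then phi else 0)
     else if i = j + 1 \<or> j = i + 1 then 1 else 0)"

definition outlier :: "real mat \<Rightarrow> real \<Rightarrow> bool" where
  "outlier A l \<longleftrightarrow> eigenvalue A l \<and> l \<notin> {-2..2}"

definition vnorm2 :: "real vec \<Rightarrow> real" where
  "vnorm2 x = sqrt (x \<bullet> x)"

definition proj_onto :: "real vec \<Rightarrow> real vec \<Rightarrow> real vec" where
  "proj_onto u x = ((x \<bullet> u) / (u \<bullet> u)) \<cdot>\<^sub>v u"

definition v_vec :: "nat \<Rightarrow> real \<Rightarrow> real vec" where
  "v_vec n eps = vec n (\<lambda>i. (1 / eps) ^ i)"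

end

theory Submission
  imports Defs
begin

text \<open>
  An eigenpair \<open>(x, l)\<close> of \<open>T\<close> satisfies \<open>x\<^sub>i\<^sub>+\<^sub>1 = l x\<^sub>i - x\<^sub>i\<^sub>-\<^sub>1\<close>, with the boundary
  conditions encoded by \<open>x\<^sub>1 = (l - eps) x\<^sub>0\<close> and a virtual entry \<open>x\<^sub>n = phi x\<^sub>n\<^sub>-\<^sub>1\<close>.
  Write \<open>l = eps + r + \<Delta>\<close> with \<open>r = 1/eps\<close>. The components \<open>x\<^sub>i\<^sub>+\<^sub>1 - eps x\<^sub>i\<close> and
  \<open>x\<^sub>i\<^sub>+\<^sub>1 - r x\<^sub>i\<close> then satisfy first order recurrences with factor \<open>r\<close>, run forwards
  resp. backwards, perturbed by \<open>\<Delta> x\<close>. The forward one bounds the last entry (this is where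
  \<open>phi \<noteq> eps\<close> enters), and then the backward one shows that \<open>\<parallel>x - x\<^sub>0 v\<^sub>n\<parallel>\<^sup>2\<close> is
  \<open>O(\<rho>\<^sup>n + \<Delta>\<^sup>2) \<parallel>x\<parallel>\<^sup>2\<close> for some \<open>\<rho> < 1\<close>. This gives part 2 directly. For
  the gap in part 1: a second eigenvalue near \<open>eps + 1/eps\<close> would give a second eigenvector,
  orthogonal to the first, that is also close to the line through \<open>v\<^sub>n\<close>, which is impossible.
\<close>

lemma square_affine_contraction:
  fixes r a b :: real
  assumes "r^2 < 1"
  shows "(r * a + b)^2 \<le> (1 + r^2) / 2 * a^2 + (1 + r^2) / (1 - r^2) * b^2"
proof -
  have pos: "0 < 1 - r^2" using assms by simp
  have "(1 + r^2) / 2 * a^2 + (1 + r^2) / (1 - r^2) * b^2 - (r * a + b)^2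
      = ((1 - r^2) * a - 2 * r * b)^2 / (2 * (1 - r^2))"
    using pos by (simp add: field_simps power2_eq_square)
  moreover have "0 \<le> ((1 - r^2) * a - 2 * r * b)^2 / (2 * (1 - r^2))"
    using pos by simp
  ultimately show ?thesis by linarith
qed

lemma contracting_recurrence_bound:
  fixes a :: "nat \<Rightarrow> real"
  assumes "0 \<le> \<rho>" "\<rho> < 1" "0 \<le> B"
    and step: "\<And>i. i < m \<Longrightarrow> (a (Suc i))^2 \<le> \<rho> * (a i)^2 + B"
  shows "(a m)^2 \<le> \<rho>^m * (a 0)^2 + B / (1 - \<rho>)"
  using step
proof (induction m)
  case 0
  then show ?case using assms(2,3) by simp
next
  case (Suc m)
  have "(a (Suc m))^2 \<le> \<rho> * (a m)^2 + B" using Suc.prems by simp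
  also have "\<dots> \<le> \<rho> * (\<rho>^m * (a 0)^2 + B / (1 - \<rho>)) + B"
    using Suc assms(1) by (simp add: mult_left_mono)
  also have "\<dots> = \<rho>^Suc m * (a 0)^2 + B / (1 - \<rho>)"
    using assms(2) by (simp add: field_simps)
  finally show ?case .
qed

lemma contracting_recurrence_sum:
  fixes a c :: "nat \<Rightarrow> real"
  assumes "0 \<le> \<rho>" "\<rho> < 1"
    and step: "\<And>i. i < m \<Longrightarrow> (a (Suc i))^2 \<le> \<rho> * (a i)^2 + c i"
  shows "(\<Sum>i\<le>m. (a i)^2) \<le> ((a 0)^2 + (\<Sum>i<m. c i)) / (1 - \<rho>)"
proof -
  have "(\<Sum>i\<le>m. (a i)^2) = (a 0)^2 + (\<Sum>i<m. (a (Suc i))^2)"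
    unfolding lessThan_Suc_atMost[symmetric] by (rule sum.lessThan_Suc_shift)
  also have "(\<Sum>i<m. (a (Suc i))^2) \<le> (\<Sum>i<m. \<rho> * (a i)^2 + c i)"
    by (rule sum_mono) (use step in auto)
  also have "\<dots> = \<rho> * (\<Sum>i<m. (a i)^2) + (\<Sum>i<m. c i)"
    by (simp add: sum.distrib sum_distrib_left)
  also have "(\<Sum>i<m. (a i)^2) \<le> (\<Sum>i\<le>m. (a i)^2)"
    by (rule sum_mono2) auto
  finally have "(\<Sum>i\<le>m. (a i)^2) \<le> (a 0)^2 + \<rho> * (\<Sum>i\<le>m. (a i)^2) + (\<Sum>i<m. c i)"
    using assms(1) by (smt (verit) mult_left_mono)
  then show ?thesis using assms(2) by (simp add: field_simps)
qed

lemma contracting_recurrence_sum_backward: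
  fixes b c :: "nat \<Rightarrow> real"
  assumes "0 \<le> \<rho>" "\<rho> < 1"
    and step: "\<And>i. i < m \<Longrightarrow> (b i)^2 \<le> \<rho> * (b (Suc i))^2 + c i"
  shows "(\<Sum>i\<le>m. (b i)^2) \<le> ((b m)^2 + (\<Sum>i<m. c i)) / (1 - \<rho>)"
proof -
  have "(\<Sum>i\<le>m. (b i)^2) = (b m)^2 + (\<Sum>i<m. (b i)^2)"
    by (simp add: lessThan_Suc_atMost[symmetric] del: lessThan_Suc_atMost)
  also have "(\<Sum>i<m. (b i)^2) \<le> (\<Sum>i<m. \<rho> * (b (Suc i))^2 + c i)"
    by (rule sum_mono) (use step in auto)
  also have "\<dots> = \<rho> * (\<Sum>i<m. (b (Suc i))^2) + (\<Sum>i<m. c i)"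
    by (simp add: sum.distrib sum_distrib_left)
  also have "(\<Sum>i<m. (b (Suc i))^2) = (\<Sum>i\<in>Suc ` {..<m}. (b i)^2)"
    by (simp add: sum.reindex)
  also have "\<dots> \<le> (\<Sum>i\<le>m. (b i)^2)"
    by (rule sum_mono2) auto
  finally have "(\<Sum>i\<le>m. (b i)^2) \<le> (b m)^2 + \<rho> * (\<Sum>i\<le>m. (b i)^2) + (\<Sum>i<m. c i)"
    using assms(1) by (smt (verit) mult_left_mono)
  then show ?thesis using assms(2) by (simp add: field_simps)
qed

locale three_term_recurrence =
  fixes eps r l :: real and n :: nat and Y :: "nat \<Rightarrow> real"
  assumes r_eps: "r * eps = 1" and abs_r: "\<bar>r\<bar> < 1" and n_pos: "0 < n"
    and initial: "Y 1 = (l - eps) * Y 0"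
    and step: "\<And>i. Suc i < n \<Longrightarrow> Y (Suc (Suc i)) = l * Y (Suc i) - Y i"
begin

abbreviation "\<rho> \<equiv> (1 + r^2) / 2"
abbreviation "K \<equiv> (1 + r^2) / (1 - r^2)"
abbreviation "\<Delta> \<equiv> l - (eps + r)"
abbreviation "S \<equiv> \<Sum>i<n. (Y i)^2"

lemma r_sq_lt_1: "r^2 < 1"
  using abs_r by (simp add: abs_square_less_1)

lemma rho_nonneg: "0 \<le> \<rho>" and rho_lt_1: "\<rho> < 1" and K_nonneg: "0 \<le> K"
  using r_sq_lt_1 by auto

lemma sq_le_S: "i < n \<Longrightarrow> (Y i)^2 \<le> S"
  by (rule member_le_sum) auto

lemma S_nonneg: "0 \<le> S"
  by (rule sum_nonneg) auto

lemma forward_component_bound: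
  "(Y n - eps * Y (n - 1))^2 \<le> (\<rho>^(n - 1) * (l - 2 * eps)^2 + K * \<Delta>^2 / (1 - \<rho>)) * S"
proof -
  define u where "u i = Y (Suc i) - eps * Y i" for i
  have "(u (n - 1))^2 \<le> \<rho>^(n - 1) * (u 0)^2 + K * \<Delta>^2 * S / (1 - \<rho>)"
  proof (rule contracting_recurrence_bound[OF rho_nonneg rho_lt_1])
    show "0 \<le> K * \<Delta>^2 * S" by (intro mult_nonneg_nonneg K_nonneg S_nonneg zero_le_power2)
    fix i assume i: "i < n - 1"
    have "Y (Suc (Suc i)) = l * Y (Suc i) - Y i" using step i by simp
    moreover have "r * u i + \<Delta> * Y (Suc i) = l * Y (Suc i) - eps * Y (Suc i) - (r * eps) * Y i"
      by (simp add: u_def algebra_simps)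
    ultimately have "u (Suc i) = r * u i + \<Delta> * Y (Suc i)"
      using r_eps by (simp add: u_def)
    then have "(u (Suc i))^2 \<le> \<rho> * (u i)^2 + K * (\<Delta> * Y (Suc i))^2"
      using square_affine_contraction[OF r_sq_lt_1] by simp
    also have "K * (\<Delta> * Y (Suc i))^2 \<le> K * (\<Delta>^2 * S)"
      using sq_le_S[of "Suc i"] i
      by (intro mult_left_mono K_nonneg) (simp_all add: power_mult_distrib mult_left_mono)
    finally show "(u (Suc i))^2 \<le> \<rho> * (u i)^2 + K * \<Delta>^2 * S" by (simp only: mult.assoc)
  qed
  moreover have "(u 0)^2 \<le> (l - 2 * eps)^2 * S"
  proof -
    have "u 0 = (l - 2 * eps) * Y 0" using initial by (simp add: u_def algebra_simps)
    then show ?thesis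
      using sq_le_S[of 0] n_pos by (simp add: power_mult_distrib mult_left_mono)
  qed
  then have "\<rho>^(n - 1) * (u 0)^2 \<le> \<rho>^(n - 1) * ((l - 2 * eps)^2 * S)"
    by (intro mult_left_mono zero_le_power rho_nonneg)
  moreover have "u (n - 1) = Y n - eps * Y (n - 1)"
    using n_pos by (simp add: u_def)
  ultimately show ?thesis
    by (simp add: distrib_right)
qed

lemma backward_component_sum:
  "(\<Sum>i\<le>n - 1. (Y (Suc i) - r * Y i)^2)
     \<le> ((Y n - r * Y (n - 1))^2 + K * r^2 * \<Delta>^2 * S) / (1 - \<rho>)"
proof -
  define w where "w i = Y (Suc i) - r * Y i" for i
  have "(\<Sum>i\<le>n - 1. (w i)^2)
      \<le> ((w (n - 1))^2 + (\<Sum>i<n - 1. K * r^2 * \<Delta>^2 * (Y (Suc i))^2)) / (1 - \<rho>)"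
  proof (rule contracting_recurrence_sum_backward[OF rho_nonneg rho_lt_1])
    fix i assume i: "i < n - 1"
    have "Y (Suc (Suc i)) = l * Y (Suc i) - Y i" using step i by simp
    moreover have "r * w (Suc i) + - (r * \<Delta> * Y (Suc i))
        = r * (Y (Suc (Suc i)) - l * Y (Suc i)) + (r * eps) * Y (Suc i)"
      by (simp add: w_def algebra_simps)
    ultimately have "r * w (Suc i) + - (r * \<Delta> * Y (Suc i)) = (r * eps) * Y (Suc i) - r * Y i"
      by simp
    then have "w i = r * w (Suc i) + - (r * \<Delta> * Y (Suc i))"
      using r_eps by (simp add: w_def)
    then have "(w i)^2 \<le> \<rho> * (w (Suc i))^2 + K * (- (r * \<Delta> * Y (Suc i)))^2"
      using square_affine_contraction[OF r_sq_lt_1] by presburger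
    then show "(w i)^2 \<le> \<rho> * (w (Suc i))^2 + K * r^2 * \<Delta>^2 * (Y (Suc i))^2"
      by (simp add: power_mult_distrib)
  qed
  also have "\<dots> \<le> ((Y n - r * Y (n - 1))^2 + K * r^2 * \<Delta>^2 * S) / (1 - \<rho>)"
  proof -
    have "(\<Sum>i<n - 1. (Y (Suc i))^2) = (\<Sum>i\<in>Suc ` {..<n - 1}. (Y i)^2)"
      by (simp add: sum.reindex)
    also have "\<dots> \<le> S"
      by (rule sum_mono2) auto
    finally have "(\<Sum>i<n - 1. K * r^2 * \<Delta>^2 * (Y (Suc i))^2) \<le> K * r^2 * \<Delta>^2 * S"
      unfolding sum_distrib_left[symmetric]
      by (intro mult_left_mono mult_nonneg_nonneg K_nonneg zero_le_power2)
    moreover have "w (n - 1) = Y n - r * Y (n - 1)"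
      using n_pos by (simp add: w_def)
    ultimately show ?thesis
      using rho_lt_1 by (intro divide_right_mono) auto
  qed
  finally show ?thesis unfolding w_def .
qed

lemma geometric_deviation_bound:
  "(\<Sum>i<n. (Y i - Y 0 * r^i)^2) \<le> K / (1 - \<rho>)^2 * ((Y n - r * Y (n - 1))^2 + K * r^2 * \<Delta>^2 * S)"
  (is "_ \<le> _ * ?X")
proof -
  define w where "w i = Y (Suc i) - r * Y i" for i
  define e where "e i = Y i - Y 0 * r^i" for i
  have "(\<Sum>i<n. (Y i - Y 0 * r^i)^2) = (\<Sum>i\<le>n - 1. (e i)^2)"
    using n_pos by (simp add: e_def lessThan_Suc_atMost[symmetric])
  also have "\<dots> \<le> ((e 0)^2 + (\<Sum>i<n - 1. K * (w i)^2)) / (1 - \<rho>)"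
  proof (rule contracting_recurrence_sum[OF rho_nonneg rho_lt_1])
    fix i
    have "e (Suc i) = r * e i + w i" by (simp add: e_def w_def algebra_simps)
    then show "(e (Suc i))^2 \<le> \<rho> * (e i)^2 + K * (w i)^2"
      using square_affine_contraction[OF r_sq_lt_1] by simp
  qed
  also have "\<dots> \<le> K * (?X / (1 - \<rho>)) / (1 - \<rho>)"
  proof -
    have "(\<Sum>i<n - 1. K * (w i)^2) \<le> K * (\<Sum>i\<le>n - 1. (w i)^2)"
      unfolding sum_distrib_left[symmetric] by (intro mult_left_mono K_nonneg sum_mono2) auto
    also have "\<dots> \<le> K * (?X / (1 - \<rho>))"
      using backward_component_sum K_nonneg unfolding w_def by (rule mult_left_mono)
    finally show ?thesis
      using rho_lt_1 by (intro divide_right_mono) (auto simp: e_def)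
  qed
  also have "\<dots> = K / (1 - \<rho>)^2 * ?X"
    by (simp add: power2_eq_square)
  finally show ?thesis .
qed

end

locale boundary_three_term_recurrence = three_term_recurrence +
  fixes phi :: real
  assumes boundary: "Y n = phi * Y (n - 1)" and phi_ne_eps: "phi \<noteq> eps"
begin

lemma last_entry_bound:
  "(Y (n - 1))^2 \<le> (\<rho>^(n - 1) * (l - 2 * eps)^2 + K * \<Delta>^2 / (1 - \<rho>)) * S / (phi - eps)^2"
proof -
  have "(Y n - eps * Y (n - 1))^2 = (phi - eps)^2 * (Y (n - 1))^2"
    unfolding boundary by (simp add: power2_eq_square algebra_simps)
  then show ?thesis
    using forward_component_bound phi_ne_eps by (simp add: le_divide_eq mult.commute)
qed

lemma deviation_bound:
  "(\<Sum>i<n. (Y i - Y 0 * r^i)^2)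
    \<le> (K / (1 - \<rho>)^2 * (phi - r)^2 / (phi - eps)^2 * \<rho>^(n - 1) * (l - 2 * eps)^2
       + K / (1 - \<rho>)^2 * (K / (1 - \<rho>) * (phi - r)^2 / (phi - eps)^2 + K * r^2) * \<Delta>^2) * S"
proof -
  have field_identity: "k / c^2 * (p * ((e1 * e2 + k * q / c) * x / d) + k * t * q * x)
      = (k / c^2 * p / d * e1 * e2 + k / c^2 * (k / c * p / d + k * t) * q) * x"
    for k c p d e1 e2 q x t :: real
    by (simp add: add_divide_distrib divide_inverse algebra_simps)
  have "(Y n - r * Y (n - 1))^2 = (phi - r)^2 * (Y (n - 1))^2"
    unfolding boundary by (simp add: power2_eq_square algebra_simps)
  then have "(\<Sum>i<n. (Y i - Y 0 * r^i)^2)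
      \<le> K / (1 - \<rho>)^2 * ((phi - r)^2 * (Y (n - 1))^2 + K * r^2 * \<Delta>^2 * S)"
    using geometric_deviation_bound by simp
  also have "\<dots> \<le> K / (1 - \<rho>)^2 * ((phi - r)^2
      * ((\<rho>^(n - 1) * (l - 2 * eps)^2 + K * \<Delta>^2 / (1 - \<rho>)) * S / (phi - eps)^2)
      + K * r^2 * \<Delta>^2 * S)"
    using last_entry_bound
    by (intro mult_left_mono add_right_mono divide_nonneg_nonneg K_nonneg zero_le_power2) auto
  also have "\<dots> = (K / (1 - \<rho>)^2 * (phi - r)^2 / (phi - eps)^2 * \<rho>^(n - 1) * (l - 2 * eps)^2
       + K / (1 - \<rho>)^2 * (K / (1 - \<rho>) * (phi - r)^2 / (phi - eps)^2 + K * r^2) * \<Delta>^2) * S"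
    by (rule field_identity)
  finally show ?thesis .
qed

end

lemma sum_square_diff_expand:
  fixes a b :: "nat \<Rightarrow> real"
  shows "(\<Sum>i<n. (p * a i - q * b i)^2)
    = p^2 * (\<Sum>i<n. (a i)^2) - 2 * p * q * (\<Sum>i<n. a i * b i) + q^2 * (\<Sum>i<n. (b i)^2)"
proof -
  have "(\<Sum>i<n. (p * a i - q * b i)^2)
      = (\<Sum>i<n. p^2 * (a i)^2 - 2 * p * q * (a i * b i) + q^2 * (b i)^2)"
    by (rule sum.cong) (auto simp: power2_eq_square algebra_simps)
  then show ?thesis
    by (simp add: sum.distrib sum_subtractf sum_distrib_left)
qed

text \<open>By orthogonality \<open>\<Sum>\<^sub>i (x\<^sub>0 y\<^sub>i - y\<^sub>0 x\<^sub>i)\<^sup>2 = x\<^sub>0\<^sup>2 \<parallel>y\<parallel>\<^sup>2 + y\<^sub>0\<^sup>2 \<parallel>x\<parallel>\<^sup>2\<close>, while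
  \<open>x\<^sub>0 y\<^sub>i - y\<^sub>0 x\<^sub>i\<close>, from which \<open>v\<close> cancels, is a combination of the two deviations.\<close>

lemma orthogonal_near_line_bound:
  fixes x y v :: "nat \<Rightarrow> real"
  assumes orth: "(\<Sum>i<n. x i * y i) = 0"
    and x_pos: "0 < (\<Sum>i<n. (x i)^2)" and y_pos: "0 < (\<Sum>i<n. (y i)^2)"
    and x_near: "(\<Sum>i<n. (x i - x 0 * v i)^2) \<le> \<eta> * (\<Sum>i<n. (x i)^2)"
    and y_near: "(\<Sum>i<n. (y i - y 0 * v i)^2) \<le> \<eta> * (\<Sum>i<n. (y i)^2)"
  shows "1 / 2 \<le> \<eta>"
proof (rule ccontr)
  assume "\<not> 1 / 2 \<le> \<eta>"
  then have \<eta>: "2 * \<eta> < 1" by simp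
  define Sx where "Sx = (\<Sum>i<n. (x i)^2)"
  define Sy where "Sy = (\<Sum>i<n. (y i)^2)"
  define Q where "Q = x 0^2 * Sy + y 0^2 * Sx"
  have "Q = (\<Sum>i<n. (x 0 * y i - y 0 * x i)^2)"
    using sum_square_diff_expand[of "x 0" y "y 0" x n] orth
    by (simp add: Q_def Sx_def Sy_def mult.commute)
  also have "\<dots> \<le> (\<Sum>i<n. 2 * x 0^2 * (y i - y 0 * v i)^2 + 2 * y 0^2 * (x i - x 0 * v i)^2)"
  proof (rule sum_mono)
    fix i
    have square_diff_le: "(a - b)^2 \<le> 2 * a^2 + 2 * b^2" for a b :: real
      using zero_le_power2[of "a + b"] by (simp add: power2_eq_square algebra_simps)
    have "x 0 * y i - y 0 * x i = x 0 * (y i - y 0 * v i) - y 0 * (x i - x 0 * v i)"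
      by (simp add: algebra_simps)
    then show "(x 0 * y i - y 0 * x i)^2
        \<le> 2 * x 0^2 * (y i - y 0 * v i)^2 + 2 * y 0^2 * (x i - x 0 * v i)^2"
      using square_diff_le[of "x 0 * (y i - y 0 * v i)" "y 0 * (x i - x 0 * v i)"]
      by (simp add: power_mult_distrib mult.assoc)
  qed
  also have "\<dots> = 2 * x 0^2 * (\<Sum>i<n. (y i - y 0 * v i)^2) + 2 * y 0^2 * (\<Sum>i<n. (x i - x 0 * v i)^2)"
    by (simp add: sum.distrib sum_distrib_left)
  also have "\<dots> \<le> 2 * x 0^2 * (\<eta> * Sy) + 2 * y 0^2 * (\<eta> * Sx)"
    using x_near y_near unfolding Sx_def Sy_def by (intro add_mono mult_left_mono) auto
  also have "\<dots> = 2 * \<eta> * Q"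
    by (simp add: Q_def algebra_simps)
  finally have "(1 - 2 * \<eta>) * Q \<le> 0"
    by (simp add: algebra_simps)
  moreover have "0 \<le> x 0^2 * Sy" "0 \<le> y 0^2 * Sx"
    using x_pos y_pos by (simp_all add: Sx_def Sy_def)
  ultimately have "y 0^2 * Sx = 0"
    using \<eta> unfolding Q_def by (smt (verit) mult_pos_pos)
  then have "y 0 = 0"
    using x_pos by (simp add: Sx_def)
  then have "Sy \<le> \<eta> * Sy"
    using y_near by (simp add: Sy_def)
  then show False
    using \<eta> y_pos by (simp add: Sy_def mult_le_cancel_right1)
qed

lemma scalar_prod_self_eq_sum:
  "dim_vec (z :: real vec) = n \<Longrightarrow> z \<bullet> z = (\<Sum>i<n. (z$i)^2)"
  unfolding scalar_prod_def lessThan_atLeast0 by (rule sum.cong) (auto simp: power2_eq_square)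

lemma vnorm2_nonneg: "0 \<le> vnorm2 z"
  unfolding vnorm2_def scalar_prod_def by (auto intro!: sum_nonneg)

lemma vnorm2_square: "dim_vec z = n \<Longrightarrow> (vnorm2 z)^2 = (\<Sum>i<n. (z$i)^2)"
  by (simp add: vnorm2_def scalar_prod_self_eq_sum sum_nonneg)

lemma proj_onto_best_approximation:
  fixes x v :: "real vec"
  assumes dx: "dim_vec x = n" and dv: "dim_vec v = n" and v: "0 < v \<bullet> v"
  shows "(vnorm2 (x - proj_onto v x))^2 \<le> (\<Sum>i<n. (x $ i - t * v $ i)^2)"
proof -
  define P where "P = (\<Sum>i<n. x $ i * v $ i)"
  define V where "V = (\<Sum>i<n. v $ i * v $ i)"
  define c where "c = P / V"
  have "V = v \<bullet> v" using dv by (simp add: V_def scalar_prod_def lessThan_atLeast0)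
  then have V: "0 < V" using v by simp
  have "proj_onto v x = c \<cdot>\<^sub>v v"
    unfolding proj_onto_def c_def P_def V_def using dx dv
    by (simp add: scalar_prod_def lessThan_atLeast0)
  then have "(vnorm2 (x - proj_onto v x))^2 = (\<Sum>i<n. (1 * x $ i - c * v $ i)^2)"
    using dx dv by (simp add: vnorm2_square)
  also have "\<dots> = (\<Sum>i<n. (x $ i)^2) - 2 * c * P + c^2 * V"
    using sum_square_diff_expand[of 1 "\<lambda>i. x $ i" c "\<lambda>i. v $ i" n]
    by (simp add: P_def V_def power2_eq_square)
  also have "\<dots> \<le> (\<Sum>i<n. (x $ i)^2) - 2 * t * P + t^2 * V"
  proof -
    have "P = c * V" using V by (simp add: c_def)
    moreover have "0 \<le> V * (t - c)^2" using V by simp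
    ultimately show ?thesis by (simp add: power2_eq_square algebra_simps)
  qed
  also have "\<dots> = (\<Sum>i<n. (1 * x $ i - t * v $ i)^2)"
    using sum_square_diff_expand[of 1 "\<lambda>i. x $ i" t "\<lambda>i. v $ i" n]
    by (simp add: P_def V_def power2_eq_square)
  finally show ?thesis by simp
qed

lemma symmetric_eigenvectors_orthogonal:
  fixes A :: "'a :: idom mat"
  assumes A: "A \<in> carrier_mat n n" and sym: "transpose_mat A = A"
    and x: "eigenvector A x m" and y: "eigenvector A y l" and ne: "l \<noteq> m"
  shows "x \<bullet> y = 0"
proof -
  have xc: "x \<in> carrier_vec n" and yc: "y \<in> carrier_vec n"
    and Ax: "A *\<^sub>v x = m \<cdot>\<^sub>v x" and Ay: "A *\<^sub>v y = l \<cdot>\<^sub>v y"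
    using x y A by (auto simp: eigenvector_def)
  have "(transpose_mat A *\<^sub>v y) \<bullet> x = y \<bullet> (A *\<^sub>v x)"
    by (rule transpose_vec_mult_scalar[OF A xc yc])
  then have "l * (y \<bullet> x) = m * (y \<bullet> x)"
    using xc yc unfolding sym Ay Ax by simp
  then show ?thesis
    using ne xc yc by (simp add: comm_scalar_prod[OF xc yc])
qed

lemma sum_squares_pos:
  assumes "dim_vec y = n" and "y \<noteq> 0\<^sub>v n"
  shows "0 < (\<Sum>i<n. (y $ i :: real)^2)"
proof -
  obtain i where i: "i < n" "y $ i \<noteq> 0"
  proof (rule ccontr)
    assume "\<not> thesis"
    with that have "y = 0\<^sub>v n"
      using assms(1) by (intro eq_vecI) auto
    with assms(2) show False ..
  qed
  have "0 < (y $ i)^2" using i by simp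
  also have "\<dots> \<le> (\<Sum>i<n. (y $ i)^2)"
    using i by (intro member_le_sum) auto
  finally show ?thesis .
qed

lemma symmetric_eigenvectors_near_line_bound:
  fixes A :: "real mat" and v :: "nat \<Rightarrow> real"
  assumes A: "A \<in> carrier_mat n n" "transpose_mat A = A"
    and x: "eigenvector A x m" and y: "eigenvector A y l" and ne: "l \<noteq> m"
    and x_near: "(\<Sum>i<n. (x $ i - x $ 0 * v i)^2) \<le> \<eta> * (\<Sum>i<n. (x $ i)^2)"
    and y_near: "(\<Sum>i<n. (y $ i - y $ 0 * v i)^2) \<le> \<eta> * (\<Sum>i<n. (y $ i)^2)"
  shows "1 / 2 \<le> \<eta>"
proof (rule orthogonal_near_line_bound[OF _ _ _ x_near y_near])
  have dims: "dim_vec x = n" "x \<noteq> 0\<^sub>v n" "dim_vec y = n" "y \<noteq> 0\<^sub>v n"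
    using x y A by (auto simp: eigenvector_def)
  show "(\<Sum>i<n. x $ i * y $ i) = 0"
    using symmetric_eigenvectors_orthogonal[OF A x y ne] dims
    by (simp add: scalar_prod_def lessThan_atLeast0)
  show "0 < (\<Sum>i<n. (x $ i)^2)" "0 < (\<Sum>i<n. (y $ i)^2)"
    using sum_squares_pos[of x n] sum_squares_pos[of y n] dims by auto
qed

lemma proj_onto_v_vec_le_deviation:
  assumes x: "dim_vec x = n" and n: "0 < n"
  shows "(vnorm2 (x - proj_onto (v_vec n eps) x))^2 \<le> (\<Sum>i<n. (x $ i - x $ 0 * (1 / eps)^i)^2)"
proof -
  have dv: "dim_vec (v_vec n eps) = n"
    by (simp add: v_vec_def)
  have "v_vec n eps $ 0 \<noteq> 0\<^sub>v n $ 0"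
    using n by (simp add: v_vec_def)
  then have "v_vec n eps \<noteq> 0\<^sub>v n"
    by metis
  then have "0 < v_vec n eps \<bullet> v_vec n eps"
    using sum_squares_pos[OF dv] scalar_prod_self_eq_sum[OF dv] by simp
  then show ?thesis
    using proj_onto_best_approximation[OF x dv] by (simp add: v_vec_def)
qed

lemma T_mat_carrier: "T_mat n eps phi \<in> carrier_mat n n"
  by (simp add: T_mat_def)

lemma transpose_T_mat: "transpose_mat (T_mat n eps phi) = T_mat n eps phi"
  by (rule eq_matI) (auto simp: T_mat_def)

lemma T_mat_mult_vec_nth:
  assumes i: "i < n" and x: "dim_vec x = n"
  shows "(T_mat n eps phi *\<^sub>v x) $ i =
    (if i = 0 then eps else if i = n - 1 then phi else 0) * x $ i
    + (if 0 < i then x $ (i - 1) else 0) + (if i + 1 < n then x $ (i + 1) else 0)"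
proof -
  let ?d = "if i = 0 then eps else if i = n - 1 then phi else 0"
  have "(T_mat n eps phi *\<^sub>v x) $ i = (\<Sum>j<n. T_mat n eps phi $$ (i, j) * x $ j)"
    using i x by (simp add: T_mat_def scalar_prod_def lessThan_atLeast0)
  also have "\<dots> = (\<Sum>j<n. (if j = i then ?d * x $ i else 0)
      + (if j = i - 1 \<and> 0 < i then x $ j else 0) + (if j = i + 1 then x $ j else 0))"
    by (rule sum.cong) (use i in \<open>auto simp: T_mat_def\<close>)
  also have "\<dots> = ?d * x $ i + (if 0 < i then x $ (i - 1) else 0) + (if i + 1 < n then x $ (i + 1) else 0)"
    using i by (simp add: sum.distrib)
  finally show ?thesis .
qed

text \<open>Extending an eigenvector by the virtual entry \<open>phi x\<^sub>n\<^sub>-\<^sub>1\<close> at index \<open>n\<close> turns all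
  \<open>n\<close> eigen-equations except the first into the same three-term recurrence.\<close>

lemma T_mat_eigenvector_boundary_recurrence:
  assumes eps: "1 < \<bar>eps\<bar>" and phi: "phi \<noteq> eps" and n: "2 \<le> n"
    and ev: "eigenvector (T_mat n eps phi) x l"
  shows "boundary_three_term_recurrence eps (1 / eps) l n
    (\<lambda>i. if i < n then x $ i else phi * x $ (n - 1)) phi"
proof -
  have dx: "dim_vec x = n" using ev by (auto simp: eigenvector_def T_mat_def)
  have eq: "(T_mat n eps phi *\<^sub>v x) $ i = l * x $ i" if "i < n" for i
    using ev dx that by (simp add: eigenvector_def)
  show ?thesis
  proof unfold_locales
    show "(if 1 < n then x $ 1 else phi * x $ (n - 1))
      = (l - eps) * (if 0 < n then x $ 0 else phi * x $ (n - 1))"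
      using eq[of 0] T_mat_mult_vec_nth[of 0 n x eps phi] n dx by (simp add: algebra_simps)
    fix i assume i: "Suc i < n"
    show "(if Suc (Suc i) < n then x $ Suc (Suc i) else phi * x $ (n - 1))
      = l * (if Suc i < n then x $ Suc i else phi * x $ (n - 1))
        - (if i < n then x $ i else phi * x $ (n - 1))"
    proof (cases "Suc (Suc i) < n")
      case True
      then have "Suc i \<noteq> n - 1" by simp
      then show ?thesis
        using True eq[of "Suc i"] T_mat_mult_vec_nth[of "Suc i" n x eps phi] dx by simp
    next
      case False
      then have "n = Suc (Suc i)" using i by simp
      then show ?thesis
        using eq[of "Suc i"] T_mat_mult_vec_nth[of "Suc i" n x eps phi] dx by (simp add: algebra_simps)
    qed
  qed (use eps phi n in \<open>auto simp: abs_divide\<close>)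
qed

lemma T_mat_eigenvector_deviation:
  fixes eps phi :: real
  assumes eps: "1 < \<bar>eps\<bar>" and phi: "phi \<noteq> eps"
  obtains \<alpha> \<beta> \<rho> :: real where "0 \<le> \<alpha>" "0 \<le> \<beta>" "0 \<le> \<rho>" "\<rho> < 1"
    and "\<And>n l x. 2 \<le> n \<Longrightarrow> eigenvector (T_mat n eps phi) x l \<Longrightarrow> \<bar>l - (eps + 1 / eps)\<bar> \<le> 1 \<Longrightarrow>
      (\<Sum>i<n. (x $ i - x $ 0 * (1 / eps)^i)^2)
        \<le> (\<alpha> * \<rho>^(n - 1) + \<beta> * (l - (eps + 1 / eps))^2) * (\<Sum>i<n. (x $ i)^2)"
proof -
  define r where "r = 1 / eps"
  define \<rho> where "\<rho> = (1 + r^2) / 2"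
  define K where "K = (1 + r^2) / (1 - r^2)"
  define L where "L = (1 + \<bar>r - eps\<bar>)^2"
  define \<alpha> where "\<alpha> = K / (1 - \<rho>)^2 * (phi - r)^2 / (phi - eps)^2"
  define \<beta> where "\<beta> = K / (1 - \<rho>)^2 * (K / (1 - \<rho>) * (phi - r)^2 / (phi - eps)^2 + K * r^2)"
  have "\<bar>r\<bar> < 1"
    using eps by (simp add: r_def abs_divide)
  then have "r^2 < 1" by (simp add: abs_square_less_1)
  then have \<rho>: "0 \<le> \<rho>" "\<rho> < 1" and K: "0 \<le> K"
    by (auto simp: \<rho>_def K_def)
  have \<alpha>: "0 \<le> \<alpha>" and \<beta>: "0 \<le> \<beta>"
    using K \<rho> by (simp_all add: \<alpha>_def \<beta>_def)
  have main: "(\<Sum>i<n. (x $ i - x $ 0 * r^i)^2)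
      \<le> (\<alpha> * L * \<rho>^(n - 1) + \<beta> * (l - (eps + r))^2) * (\<Sum>i<n. (x $ i)^2)"
    if n: "2 \<le> n" and ev: "eigenvector (T_mat n eps phi) x l" and l: "\<bar>l - (eps + r)\<bar> \<le> 1"
    for n l x
  proof -
    define Y where "Y i = (if i < n then x $ i else phi * x $ (n - 1))" for i
    interpret boundary_three_term_recurrence eps r l n Y phi
      unfolding Y_def r_def by (rule T_mat_eigenvector_boundary_recurrence[OF eps phi n ev])
    have "\<bar>l - 2 * eps\<bar> \<le> 1 + \<bar>r - eps\<bar>"
      using l by linarith
    then have "(l - 2 * eps)^2 \<le> L"
      unfolding L_def by (metis abs_ge_zero power2_abs power_mono)
    then have leading: "\<alpha> * \<rho>^(n - 1) * (l - 2 * eps)^2 \<le> \<alpha> * L * \<rho>^(n - 1)"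
      using mult_left_mono[of "(l - 2 * eps)^2" L "\<alpha> * \<rho>^(n - 1)"] \<alpha> \<rho> by (simp add: ac_simps)
    have "(\<Sum>i<n. (Y i - Y 0 * r^i)^2)
        \<le> (\<alpha> * \<rho>^(n - 1) * (l - 2 * eps)^2 + \<beta> * (l - (eps + r))^2) * (\<Sum>i<n. (Y i)^2)"
      using deviation_bound unfolding \<alpha>_def \<beta>_def \<rho>_def K_def by (simp add: mult.assoc)
    also have "\<dots> \<le> (\<alpha> * L * \<rho>^(n - 1) + \<beta> * (l - (eps + r))^2) * (\<Sum>i<n. (Y i)^2)"
      using leading by (intro mult_right_mono add_right_mono S_nonneg)
    finally show ?thesis
      using n by (simp add: Y_def)
  qed
  have "0 \<le> \<alpha> * L"
    using \<alpha> by (simp add: L_def)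
  from that[OF this \<beta> \<rho> main[unfolded r_def]] show ?thesis .
qed

lemma T_mat_eigenvector_near_geometric:
  fixes eps phi \<delta> :: real
  assumes eps: "1 < \<bar>eps\<bar>" and phi: "phi \<noteq> eps" and \<delta>: "0 < \<delta>"
  shows "\<exists>c>0. \<forall>\<^sub>F n in sequentially. \<forall>l x.
    eigenvector (T_mat n eps phi) x l \<and> \<bar>l - (eps + 1 / eps)\<bar> < c \<longrightarrow>
      (\<Sum>i<n. (x $ i - x $ 0 * (1 / eps)^i)^2) \<le> \<delta> * (\<Sum>i<n. (x $ i)^2)"
proof -
  obtain \<alpha> \<beta> \<rho> :: real where "0 \<le> \<alpha>" and \<beta>: "0 \<le> \<beta>" and \<rho>: "0 \<le> \<rho>" "\<rho> < 1"
    and deviation: "\<And>n l x. 2 \<le> n \<Longrightarrow> eigenvector (T_mat n eps phi) x l \<Longrightarrow>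
      \<bar>l - (eps + 1 / eps)\<bar> \<le> 1 \<Longrightarrow> (\<Sum>i<n. (x $ i - x $ 0 * (1 / eps)^i)^2)
        \<le> (\<alpha> * \<rho>^(n - 1) + \<beta> * (l - (eps + 1 / eps))^2) * (\<Sum>i<n. (x $ i)^2)"
    using that by (rule T_mat_eigenvector_deviation[OF eps phi])
  define c where "c = min 1 (\<delta> / (2 * (\<beta> + 1)))"
  have c: "0 < c" "c \<le> 1"
    using \<delta> \<beta> by (auto simp: c_def)
  have "\<beta> * c^2 \<le> \<beta> * c"
    using c \<beta> by (intro mult_left_mono) (auto simp: power2_eq_square mult_left_le)
  also have "\<dots> \<le> \<beta> * (\<delta> / (2 * (\<beta> + 1)))"
    using \<beta> by (intro mult_left_mono) (auto simp: c_def)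
  also have "\<dots> < \<delta> / 2"
    using \<beta> \<delta> by (simp add: field_simps)
  finally have \<beta>c: "\<beta> * c^2 < \<delta> / 2" .
  have "(\<lambda>n. \<rho>^(n - 1)) \<longlonglongrightarrow> 0"
    by (rule LIMSEQ_offset[where k = 1]) (simp add: LIMSEQ_power_zero \<rho>)
  then have "(\<lambda>n. \<alpha> * \<rho>^(n - 1)) \<longlonglongrightarrow> \<alpha> * 0"
    by (intro tendsto_intros)
  then have "\<forall>\<^sub>F n in sequentially. \<alpha> * \<rho>^(n - 1) < \<delta> / 2"
    using \<delta> by (intro order_tendstoD(2)) auto
  with eventually_ge_at_top[of 2] have "\<forall>\<^sub>F n in sequentially. \<forall>l x.
      eigenvector (T_mat n eps phi) x l \<and> \<bar>l - (eps + 1 / eps)\<bar> < c \<longrightarrow>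
        (\<Sum>i<n. (x $ i - x $ 0 * (1 / eps)^i)^2) \<le> \<delta> * (\<Sum>i<n. (x $ i)^2)"
  proof (eventually_elim, intro allI impI, elim conjE)
    fix n l x assume n: "2 \<le> n" and small: "\<alpha> * \<rho>^(n - 1) < \<delta> / 2"
      and ev: "eigenvector (T_mat n eps phi) x l" and l: "\<bar>l - (eps + 1 / eps)\<bar> < c"
    have "(l - (eps + 1 / eps))^2 \<le> c^2"
      using l by (metis abs_ge_zero power2_abs power_mono less_imp_le)
    then have "\<beta> * (l - (eps + 1 / eps))^2 \<le> \<beta> * c^2"
      using \<beta> by (rule mult_left_mono)
    then have "\<alpha> * \<rho>^(n - 1) + \<beta> * (l - (eps + 1 / eps))^2 \<le> \<delta>"
      using small \<beta>c by linarith
    then have "(\<alpha> * \<rho>^(n - 1) + \<beta> * (l - (eps + 1 / eps))^2) * (\<Sum>i<n. (x $ i)^2)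
        \<le> \<delta> * (\<Sum>i<n. (x $ i)^2)"
      by (intro mult_right_mono sum_nonneg) auto
    moreover have "\<bar>l - (eps + 1 / eps)\<bar> \<le> 1"
      using l c by linarith
    ultimately show "(\<Sum>i<n. (x $ i - x $ 0 * (1 / eps)^i)^2) \<le> \<delta> * (\<Sum>i<n. (x $ i)^2)"
      using deviation[OF n ev] by linarith
  qed
  then show ?thesis
    using c by blast
qed

lemma abs_add_inverse_gt_two:
  fixes eps :: real
  assumes "1 < \<bar>eps\<bar>"
  shows "2 < \<bar>eps + 1 / eps\<bar>"
proof -
  have "eps + 1 / eps = (eps^2 + 1) / eps"
    using assms by (auto simp: field_simps power2_eq_square)
  then have "\<bar>eps + 1 / eps\<bar> = (eps^2 + 1) / \<bar>eps\<bar>"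
    by simp
  moreover have "2 * \<bar>eps\<bar> < eps^2 + 1"
    using assms zero_less_power2[of "\<bar>eps\<bar> - 1"] by (simp add: power2_eq_square algebra_simps)
  ultimately show ?thesis
    using assms by (simp add: less_divide_eq)
qed

lemma T_mat_eventually_outlier:
  fixes eps :: real and \<mu> :: "nat \<Rightarrow> real"
  assumes eps: "1 < \<bar>eps\<bar>"
    and eigpair: "\<And>n. 2 \<le> n \<Longrightarrow> eigenvector (T_mat n eps phi) (x n) (\<mu> n)"
    and lim: "\<mu> \<longlonglongrightarrow> eps + 1 / eps"
  shows "\<forall>\<^sub>F n in sequentially. outlier (T_mat n eps phi) (\<mu> n)"
proof -
  have "(\<lambda>n. \<bar>\<mu> n\<bar>) \<longlonglongrightarrow> \<bar>eps + 1 / eps\<bar>"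
    using lim by (rule tendsto_rabs)
  then have "\<forall>\<^sub>F n in sequentially. 2 < \<bar>\<mu> n\<bar>"
    using abs_add_inverse_gt_two[OF eps] by (rule order_tendstoD(1))
  with eventually_ge_at_top[of 2] show ?thesis
    by eventually_elim (use eigpair in \<open>auto simp: outlier_def eigenvalue_def\<close>)
qed

lemma T_mat_eigenvalue_gap:
  fixes eps phi :: real and \<mu> :: "nat \<Rightarrow> real" and x :: "nat \<Rightarrow> real vec"
  assumes eps: "1 < \<bar>eps\<bar>" and phi: "phi \<noteq> eps"
    and eigpair: "\<And>n. 2 \<le> n \<Longrightarrow> eigenvector (T_mat n eps phi) (x n) (\<mu> n)"
    and lim: "\<mu> \<longlonglongrightarrow> eps + 1 / eps"
  shows "\<exists>c>0. \<forall>\<^sub>F n in sequentially. \<forall>l. eigenvalue (T_mat n eps phi) l \<and> l \<noteq> \<mu> n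
    \<longrightarrow> c \<le> \<bar>l - (eps + 1 / eps)\<bar>"
proof -
  obtain c where c: "0 < c" and near: "\<forall>\<^sub>F n in sequentially. \<forall>l y.
      eigenvector (T_mat n eps phi) y l \<and> \<bar>l - (eps + 1 / eps)\<bar> < c \<longrightarrow>
        (\<Sum>i<n. (y $ i - y $ 0 * (1 / eps)^i)^2) \<le> 1 / 4 * (\<Sum>i<n. (y $ i)^2)"
    using T_mat_eigenvector_near_geometric[OF eps phi, of "1 / 4"] by auto
  have close: "\<forall>\<^sub>F n in sequentially. \<bar>\<mu> n - (eps + 1 / eps)\<bar> < c"
    using tendstoD[OF lim c] by (simp add: dist_real_def)
  from near close eventually_ge_at_top[of 2]
  have "\<forall>\<^sub>F n in sequentially. \<forall>l. eigenvalue (T_mat n eps phi) l \<and> l \<noteq> \<mu> n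
      \<longrightarrow> c \<le> \<bar>l - (eps + 1 / eps)\<bar>"
  proof eventually_elim
    case (elim n)
    show ?case
    proof (intro allI impI; elim conjE; rule ccontr)
      fix l assume "eigenvalue (T_mat n eps phi) l" "l \<noteq> \<mu> n" "\<not> c \<le> \<bar>l - (eps + 1 / eps)\<bar>"
      then obtain y where y: "eigenvector (T_mat n eps phi) y l"
        and ne: "l \<noteq> \<mu> n" and l: "\<bar>l - (eps + 1 / eps)\<bar> < c"
        by (auto simp: eigenvalue_def)
      have x: "eigenvector (T_mat n eps phi) (x n) (\<mu> n)"
        using eigpair elim(3) .
      have "1 / 2 \<le> (1 / 4 :: real)"
        by (rule symmetric_eigenvectors_near_line_bound[OF T_mat_carrier transpose_T_mat x y ne,
              where v = "\<lambda>i. (1 / eps)^i"])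
          (use elim(1,2) x y l in blast)+
      then show False by simp
    qed
  qed
  with c show ?thesis by blast
qed

lemma T_mat_eigenvector_projection_tendsto:
  fixes eps phi :: real and \<mu> :: "nat \<Rightarrow> real" and x :: "nat \<Rightarrow> real vec"
  assumes eps: "1 < \<bar>eps\<bar>" and phi: "phi \<noteq> eps"
    and eigpair: "\<And>n. 2 \<le> n \<Longrightarrow> eigenvector (T_mat n eps phi) (x n) (\<mu> n)"
    and unit: "\<And>n. 2 \<le> n \<Longrightarrow> vnorm2 (x n) = 1"
    and lim: "\<mu> \<longlonglongrightarrow> eps + 1 / eps"
  shows "(\<lambda>n. vnorm2 (x n - proj_onto (v_vec n eps) (x n))) \<longlonglongrightarrow> 0"
proof -
  define err where "err n = vnorm2 (x n - proj_onto (v_vec n eps) (x n))" for n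
  have "(\<lambda>n. (err n)^2) \<longlonglongrightarrow> 0"
  proof (rule order_tendstoI)
    fix a :: real assume "a < 0"
    then show "\<forall>\<^sub>F n in sequentially. a < (err n)^2"
      by (intro always_eventually allI) (simp add: less_le_trans)
  next
    fix \<delta> :: real assume \<delta>: "0 < \<delta>"
    obtain c where c: "0 < c" and near: "\<forall>\<^sub>F n in sequentially. \<forall>l y.
        eigenvector (T_mat n eps phi) y l \<and> \<bar>l - (eps + 1 / eps)\<bar> < c \<longrightarrow>
          (\<Sum>i<n. (y $ i - y $ 0 * (1 / eps)^i)^2) \<le> \<delta> / 2 * (\<Sum>i<n. (y $ i)^2)"
      using T_mat_eigenvector_near_geometric[OF eps phi, of "\<delta> / 2"] \<delta> by auto
    have close: "\<forall>\<^sub>F n in sequentially. \<bar>\<mu> n - (eps + 1 / eps)\<bar> < c"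
      using tendstoD[OF lim c] by (simp add: dist_real_def)
    from near close eventually_ge_at_top[of 2] show "\<forall>\<^sub>F n in sequentially. (err n)^2 < \<delta>"
    proof eventually_elim
      case (elim n)
      have x: "eigenvector (T_mat n eps phi) (x n) (\<mu> n)"
        using eigpair elim(3) .
      then have dx: "dim_vec (x n) = n"
        by (auto simp: eigenvector_def T_mat_def)
      have "(err n)^2 \<le> (\<Sum>i<n. (x n $ i - x n $ 0 * (1 / eps)^i)^2)"
        unfolding err_def using dx elim(3) by (intro proj_onto_v_vec_le_deviation) auto
      also have "\<dots> \<le> \<delta> / 2 * (\<Sum>i<n. (x n $ i)^2)"
        using elim(1,2) x by blast
      also have "(\<Sum>i<n. (x n $ i)^2) = 1"
        using unit[OF elim(3)] vnorm2_square[OF dx] by simp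
      finally show ?case using \<delta> by simp
    qed
  qed
  then have "(\<lambda>n. sqrt ((err n)^2)) \<longlonglongrightarrow> 0"
    using tendsto_real_sqrt by fastforce
  then show ?thesis
    by (simp add: err_def vnorm2_nonneg)
qed

theorem theorem3p2:
  fixes eps phi :: real and \<mu> :: "nat \<Rightarrow> real" and x :: "nat \<Rightarrow> real vec"
  assumes eps: "\<bar>eps\<bar> > 1" and phi: "phi \<noteq> eps"
    and eigpair: "\<And>n. n \<ge> 2 \<Longrightarrow> eigenvector (T_mat n eps phi) (x n) (\<mu> n)"
    and unit: "\<And>n. n \<ge> 2 \<Longrightarrow> vnorm2 (x n) = 1"
    and lim: "\<mu> \<longlonglongrightarrow> eps + 1 / eps"
  shows "((\<forall>\<^sub>F n in sequentially. outlier (T_mat n eps phi) (\<mu> n))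
       \<and> (\<exists>c > 0. \<forall>\<^sub>F n in sequentially. \<forall>l. eigenvalue (T_mat n eps phi) l \<and> l \<noteq> \<mu> n
              \<longrightarrow> \<bar>l - (eps + 1 / eps)\<bar> \<ge> c))
       \<and> ((\<lambda>n. vnorm2 (x n - proj_onto (v_vec n eps) (x n))) \<longlonglongrightarrow> 0)"
  using T_mat_eventually_outlier[OF eps eigpair lim]
    T_mat_eigenvalue_gap[OF eps phi eigpair lim]
    T_mat_eigenvector_projection_tendsto[OF eps phi eigpair unit lim]
  by blast

end
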